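(* Let $(X,T)$ be a topologically transitive topological dynamical system, where $X$ is totally disconnected, and suppose every nonempty open subset of $X$ has positive measure for at least one $T$-invariant Borel probability measure. If $p,q$ are relatively prime positive integers such that $\theta=p/q\in(0,1)$ and $\exp(2\pi i\theta)$ is a continuous eigenvalue of $T$, then there exists a clopen set $U\subseteq X$ such that $q[1_U]=p[1_X]$ in $K^0(X,T)$.
   Context: A topological dynamical system is a compact metric space $X$ with a homeomorphism $T$; topologically transitive means some orbit is dense. A continuous eigenvalue is $\lambda$ with $f\circ T=\lambda f$ for some continuous $f:X\to\mathbb S^1$. $K^0(X,T)=C(X,\mathbb Z)/\{f-f\circ T:f\in C(X,\mathbb Z)\}$, $[f]$ the class of $f$. *)

theory Defs
  imports "HOL-Analysis.Analysis" "HOL-Probability.Probability"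
begin

definition tds :: "'a::metric_space set \<Rightarrow> ('a \<Rightarrow> 'a) \<Rightarrow> bool" where
  "tds X T \<longleftrightarrow> compact X \<and> (\<exists>Tinv. homeomorphism X X T Tinv)"

definition orbit :: "'a::metric_space set \<Rightarrow> ('a \<Rightarrow> 'a) \<Rightarrow> 'a \<Rightarrow> 'a set" where
  "orbit X T x = {(T ^^ n) x | n. True} \<union>
     {((inv_into X T) ^^ n) x | n. True}"

definition top_transitive :: "'a::metric_space set \<Rightarrow> ('a \<Rightarrow> 'a) \<Rightarrow> bool" where
  "top_transitive X T \<longleftrightarrow> (\<exists>x\<in>X. X \<subseteq> closure (orbit X T x))"

definition totally_disconnected :: "'a::topological_space set \<Rightarrow> bool" where
  "totally_disconnected X \<longleftrightarrow> (\<forall>S. S \<subseteq> X \<and> connected S \<longrightarrow> (\<exists>a. S \<subseteq> {a}))"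

definition invariant_prob :: "'a::metric_space set \<Rightarrow> ('a \<Rightarrow> 'a) \<Rightarrow> 'a measure \<Rightarrow> bool" where
  "invariant_prob X T M \<longleftrightarrow> prob_space M \<and> space M = X \<and>
     sets M = sets (restrict_space borel X) \<and> T \<in> measurable M M \<and> distr M M T = M"

definition continuous_eigenvalue :: "'a::metric_space set \<Rightarrow> ('a \<Rightarrow> 'a) \<Rightarrow> complex \<Rightarrow> bool" where
  "continuous_eigenvalue X T lam \<longleftrightarrow>
     (\<exists>f :: 'a \<Rightarrow> complex. continuous_on X f \<and> f ` X \<subseteq> sphere 0 1 \<and>
        (\<forall>x\<in>X. f (T x) = lam * f x))"

text \<open>C(X,Z) and the class [f] in K^0(X,T) = C(X,Z) / {h - h o T}.\<close>
definition CXZ :: "'a::metric_space set \<Rightarrow> ('a \<Rightarrow> int) set" where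
  "CXZ X = {f. continuous_on X f}"

definition K0_class :: "'a::metric_space set \<Rightarrow> ('a \<Rightarrow> 'a) \<Rightarrow> ('a \<Rightarrow> int) \<Rightarrow> ('a \<Rightarrow> int) set" where
  "K0_class X T f = {g \<in> CXZ X. \<exists>h \<in> CXZ X. \<forall>x\<in>X. f x - g x = h x - h (T x)}"

definition clopen_in :: "'a::topological_space set \<Rightarrow> 'a set \<Rightarrow> bool" where
  "clopen_in X U \<longleftrightarrow> openin (top_of_set X) U \<and> closedin (top_of_set X) U"

end

theory Submission
  imports Defs
begin

text \<open>Normalising a continuous eigenfunction for \<open>\<lambda> = e^{2\<pi>ip/q}\<close> by its value at a point with
  dense orbit gives a continuous map \<open>r\<close> into the \<open>q\<close>-th roots of unity with \<open>r \<circ> T = \<lambda> r\<close>,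
  because \<open>r^q\<close> is a continuous \<open>T\<close>-invariant function and hence constant. Writing \<open>r = \<lambda>^k\<close>,
  the locally constant function \<open>k : X \<rightarrow> {0,\<dots>,q-1}\<close> satisfies \<open>k \<circ> T = k + 1 mod q\<close>. For
  \<open>U = {k < p}\<close> one checks \<open>q 1\<^sub>U - p = h - h \<circ> T\<close> with \<open>h = p k - q min(k, p)\<close>.\<close>

lemma continuous_on_int_diff:
  fixes a b :: "'a::topological_space \<Rightarrow> int"
  assumes "continuous_on S a" and "continuous_on S b"
  shows "continuous_on S (\<lambda>x. a x - b x)"
proof -
  have "continuous_on S (\<lambda>x. a x + (-1) * b x)"
    using assms by (intro continuous_intros)
  then show ?thesis
    by simp
qed

lemma K0_class_subset_if_cohomologous:
  assumes "continuous_on X h" and "\<And>x. x \<in> X \<Longrightarrow> f x - g x = h x - h (T x)"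
  shows "K0_class X T f \<subseteq> K0_class X T g"
proof
  fix u assume "u \<in> K0_class X T f"
  then obtain k where u: "u \<in> CXZ X" and k: "continuous_on X k"
    and fu: "\<And>x. x \<in> X \<Longrightarrow> f x - u x = k x - k (T x)"
    unfolding K0_class_def CXZ_def by blast
  have "continuous_on X (\<lambda>x. k x - h x)"
    using k assms(1) by (rule continuous_on_int_diff)
  moreover have "g x - u x = (k x - h x) - (k (T x) - h (T x))" if "x \<in> X" for x
    using fu[OF that] assms(2)[OF that] by linarith
  ultimately show "u \<in> K0_class X T g"
    using u unfolding K0_class_def CXZ_def
    by (intro CollectI conjI bexI[where x = "\<lambda>x. k x - h x"]) auto
qed

lemma K0_class_eq_if_cohomologous:
  assumes "continuous_on X h" and "\<And>x. x \<in> X \<Longrightarrow> f x - g x = h x - h (T x)"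
  shows "K0_class X T f = K0_class X T g"
proof
  show "K0_class X T f \<subseteq> K0_class X T g"
    using assms by (rule K0_class_subset_if_cohomologous)
  have "continuous_on X (\<lambda>x. 0 - h x)"
    using continuous_on_const assms(1) by (rule continuous_on_int_diff)
  moreover have "g x - f x = (0 - h x) - (0 - h (T x))" if "x \<in> X" for x
    using assms(2)[OF that] by linarith
  ultimately show "K0_class X T g \<subseteq> K0_class X T f"
    by (rule K0_class_subset_if_cohomologous)
qed

lemma clopen_in_preimage_discrete:
  fixes k :: "'a::topological_space \<Rightarrow> 'b::discrete_topology"
  assumes "continuous_on X k"
  shows "clopen_in X (X \<inter> k -` A)"
  unfolding clopen_in_def
  using continuous_openin_preimage_gen[OF assms Topological_Spaces.open_discrete]
    continuous_closedin_preimage[OF assms] by (simp add: closed_def Topological_Spaces.open_discrete)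

lemma continuous_invariant_function_constant:
  fixes g :: "'a::metric_space \<Rightarrow> 'b::t1_space"
  assumes "T ` X = X" and "top_transitive X T" and "continuous_on X g"
    and invariant: "\<And>x. x \<in> X \<Longrightarrow> g (T x) = g x"
  obtains c where "\<And>x. x \<in> X \<Longrightarrow> g x = c"
proof -
  obtain x0 where x0: "x0 \<in> X" "X \<subseteq> closure (orbit X T x0)"
    using assms(2) unfolding top_transitive_def by blast
  define L where "L = {x \<in> X. g x = g x0}"
  have forward: "(T ^^ n) x0 \<in> L" for n
    by (induction n) (use x0 assms(1) invariant in \<open>auto simp: L_def\<close>)
  have backward: "(inv_into X T ^^ n) x0 \<in> L" for n
  proof (induction n)
    case (Suc n)
    then have "(inv_into X T ^^ n) x0 \<in> T ` X"
      using assms(1) by (simp add: L_def)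
    then show ?case
      using Suc invariant[of "inv_into X T ((inv_into X T ^^ n) x0)"]
      by (auto simp: L_def inv_into_into f_inv_into_f)
  qed (use x0 in \<open>simp add: L_def\<close>)
  obtain C where C: "closed C" "L = X \<inter> C"
    using continuous_closedin_preimage_constant[OF assms(3)] unfolding L_def closedin_closed by blast
  have "orbit X T x0 \<subseteq> C"
    using forward backward C(2) unfolding orbit_def by blast
  then have "closure (orbit X T x0) \<subseteq> C"
    using C(1) by (rule closure_minimal)
  then have "X \<subseteq> L"
    using x0(2) C(2) by blast
  then show ?thesis
    using that unfolding L_def by blast
qed

lemma exp_rational_power_eq_1_iff:
  fixes p q n :: nat
  assumes "0 < q" and "coprime p q"
  shows "exp (2 * pi * \<i> * of_real (real p / real q)) ^ n = 1 \<longleftrightarrow> q dvd n"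
proof -
  have "exp (2 * pi * \<i> * of_real (real p / real q)) ^ n
      = exp (2 * complex_of_real pi * \<i> * of_nat (n * p) / of_nat q)"
    unfolding exp_of_nat_mult[symmetric] by (rule arg_cong[where f = exp]) (simp add: field_simps)
  also have "\<dots> = 1 \<longleftrightarrow> q dvd n * p"
    using complex_root_unity_eq_1[of q "n * p"] assms(1) by simp
  also have "\<dots> \<longleftrightarrow> q dvd n"
    using assms(2) by (metis coprime_commute coprime_dvd_mult_left_iff)
  finally show ?thesis .
qed

lemma primitive_root_power_mod:
  fixes l :: "'a::monoid_mult"
  assumes "l ^ q = 1"
  shows "l ^ n = l ^ (n mod q)"
proof -
  have "l ^ n = l ^ (q * (n div q) + n mod q)"
    by (simp only: mult_div_mod_eq)
  also have "\<dots> = (l ^ q) ^ (n div q) * l ^ (n mod q)"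
    by (simp only: power_add power_mult)
  finally show ?thesis
    using assms by simp
qed

lemma bij_betw_primitive_root_powers:
  fixes l :: complex
  assumes "0 < q" and primitive: "\<And>n. l ^ n = 1 \<longleftrightarrow> q dvd n"
  shows "bij_betw (\<lambda>j. l ^ j) {..<q} {z. z ^ q = 1}"
proof -
  have "l ^ q = 1"
    using primitive[of q] by simp
  then have "l \<noteq> 0"
    using assms(1) by (metis power_0_left zero_neq_one not_gr0)
  have injective: "i = j" if "i < q" "j < q" "i \<le> j" "l ^ i = l ^ j" for i j
  proof -
    have "l ^ i * l ^ (j - i) = l ^ i * 1"
      using that(3,4) by (metis mult_1_right le_add_diff_inverse power_add)
    then have "l ^ (j - i) = 1"
      using \<open>l \<noteq> 0\<close> by simp
    then have "q dvd j - i"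
      using primitive by blast
    moreover have "j - i < q"
      using that(2) by linarith
    ultimately show "i = j"
      using that(3) dvd_imp_le by fastforce
  qed
  have inj: "inj_on (\<lambda>j. l ^ j) {..<q}"
  proof (rule inj_onI)
    fix i j assume "i \<in> {..<q}" "j \<in> {..<q}" "l ^ i = l ^ j"
    then show "i = j"
      using injective[of i j] injective[of j i] by (cases "i \<le> j") auto
  qed
  have "(l ^ j) ^ q = 1" for j
    by (metis \<open>l ^ q = 1\<close> mult.commute power_mult power_one)
  then have into: "(\<lambda>j. l ^ j) ` {..<q} \<subseteq> {z. z ^ q = 1}"
    by auto
  have "card ((\<lambda>j. l ^ j) ` {..<q}) = card {z::complex. z ^ q = 1}"
    using inj card_roots_unity_eq[OF assms(1)] by (simp add: card_image)
  then have "(\<lambda>j. l ^ j) ` {..<q} = {z. z ^ q = 1}"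
    using into by (intro card_subset_eq finite_roots_unity) (use assms(1) in auto)
  then show ?thesis
    using inj by (simp add: bij_betw_def)
qed

lemma root_unity_eigenfunction:
  assumes "T ` X = X" and "top_transitive X T" and "continuous_eigenvalue X T l" and "l ^ q = 1"
  obtains r where "continuous_on X r" and "\<And>x. x \<in> X \<Longrightarrow> r x ^ q = 1"
    and "\<And>x. x \<in> X \<Longrightarrow> r (T x) = l * r x"
proof -
  obtain f where f: "continuous_on X f" and unimodular: "f ` X \<subseteq> sphere 0 1"
    and eigen: "\<And>x. x \<in> X \<Longrightarrow> f (T x) = l * f x"
    using assms(3) unfolding continuous_eigenvalue_def by blast
  have "continuous_on X (\<lambda>x. f x ^ q)"
    using f by (intro continuous_intros)
  moreover have "f (T x) ^ q = f x ^ q" if "x \<in> X" for x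
    using eigen[OF that] assms(4) by (simp add: power_mult_distrib)
  ultimately obtain c where c: "\<And>x. x \<in> X \<Longrightarrow> f x ^ q = c"
    using continuous_invariant_function_constant[OF assms(1,2)] by blast
  obtain x0 where "x0 \<in> X"
    using assms(2) unfolding top_transitive_def by blast
  have nonzero: "f x \<noteq> 0" if "x \<in> X" for x
    using unimodular that by fastforce
  define r where "r x = f x / f x0" for x
  show thesis
  proof
    show "continuous_on X r"
      unfolding r_def using f nonzero[OF \<open>x0 \<in> X\<close>] by (intro continuous_intros) auto
    show "r x ^ q = 1" if "x \<in> X" for x
    proof -
      have "f x ^ q = f x0 ^ q"
        using c that \<open>x0 \<in> X\<close> by simp
      then show ?thesis
        using nonzero[OF \<open>x0 \<in> X\<close>] by (simp add: r_def power_divide)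
    qed
    show "r (T x) = l * r x" if "x \<in> X" for x
      using eigen[OF that] by (simp add: r_def)
  qed
qed

lemma root_unity_eigenfunction_exponent:
  fixes r :: "'a::topological_space \<Rightarrow> complex"
  assumes "0 < q" and primitive: "\<And>n. l ^ n = 1 \<longleftrightarrow> q dvd n"
    and "continuous_on X r" and root: "\<And>x. x \<in> X \<Longrightarrow> r x ^ q = 1"
    and eigen: "\<And>x. x \<in> X \<Longrightarrow> r (T x) = l * r x"
  obtains k :: "'a \<Rightarrow> nat" where "continuous_on X k" and "\<And>x. x \<in> X \<Longrightarrow> k x < q"
    and "\<And>x. x \<in> X \<Longrightarrow> k (T x) = (k x + 1) mod q"
proof -
  define R where "R = {z::complex. z ^ q = 1}"
  define dlog where "dlog = the_inv_into {..<q} (\<lambda>j. l ^ j)"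
  have bij: "bij_betw (\<lambda>j. l ^ j) {..<q} R"
    unfolding R_def using assms(1) primitive by (rule bij_betw_primitive_root_powers)
  have rR: "r x \<in> R" if "x \<in> X" for x
    using root[OF that] by (simp add: R_def)
  have dlog: "dlog z < q" "l ^ dlog z = z" if "z \<in> R" for z
    using bij that unfolding dlog_def bij_betw_def by (auto simp: the_inv_into_f_f)
  show thesis
  proof
    have "continuous_on R dlog"
      unfolding R_def using assms(1) by (intro continuous_on_finite finite_roots_unity) simp
    then show "continuous_on X (\<lambda>x. dlog (r x))"
      using assms(3) rR by (intro continuous_on_compose2[of R dlog X r]) auto
    show "dlog (r x) < q" if "x \<in> X" for x
      using dlog(1) rR that by blast
    show "dlog (r (T x)) = (dlog (r x) + 1) mod q" if "x \<in> X" for x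
    proof -
      have "l ^ ((dlog (r x) + 1) mod q) = l * r x"
        using primitive_root_power_mod[of l q "dlog (r x) + 1"] primitive[of q]
          dlog(2)[OF rR[OF that]] by simp
      then have "dlog (r (T x)) = dlog (l ^ ((dlog (r x) + 1) mod q))"
        using eigen[OF that] by simp
      also have "\<dots> = (dlog (r x) + 1) mod q"
        unfolding dlog_def using bij assms(1) by (simp add: bij_betw_def the_inv_into_f_f)
      finally show ?thesis .
    qed
  qed
qed

definition rotation_transfer :: "nat \<Rightarrow> nat \<Rightarrow> nat \<Rightarrow> int" where
  "rotation_transfer p q m = int p * int m - int q * int (min m p)"

lemma rotation_indicator_coboundary:
  fixes m p q :: nat
  assumes "m < q" and "p \<le> q"
  shows "int q * (if m < p then 1 else 0) - int p
    = rotation_transfer p q m - rotation_transfer p q ((m + 1) mod q)"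
proof (cases "m + 1 < q")
  case True
  then show ?thesis
    by (auto simp: rotation_transfer_def min_def algebra_simps)
next
  case False
  then have m: "m = q - 1"
    using assms(1) by linarith
  have "(m + 1) mod q = 0"
    using False assms(1) by (metis Suc_eq_plus1 Suc_lessI mod_self)
  then show ?thesis
    using m assms
    by (cases "p = q") (auto simp: rotation_transfer_def min_def algebra_simps of_nat_diff)
qed

lemma K0_class_rotation_indicator:
  fixes k :: "'a::metric_space \<Rightarrow> nat"
  assumes "continuous_on X k" and "\<And>x. x \<in> X \<Longrightarrow> k x < q"
    and rotation: "\<And>x. x \<in> X \<Longrightarrow> k (T x) = (k x + 1) mod q" and "p \<le> q"
  shows "K0_class X T (\<lambda>x. int q * indicator {x \<in> X. k x < p} x) = K0_class X T (\<lambda>x. int p)"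
proof (rule K0_class_eq_if_cohomologous)
  show "continuous_on X (\<lambda>x. rotation_transfer p q (k x))"
    by (rule continuous_on_compose2[OF Topological_Spaces.continuous_on_discrete assms(1)]) auto
  show "int q * indicator {x \<in> X. k x < p} x - int p
      = rotation_transfer p q (k x) - rotation_transfer p q (k (T x))" if "x \<in> X" for x
    using rotation_indicator_coboundary[OF assms(2)[OF that] assms(4)] rotation[OF that] that
    by (cases "k x < p") (simp_all add: indicator_def)
qed

theorem mainTheorem7:
  fixes X :: "'a::metric_space set" and T :: "'a \<Rightarrow> 'a" and p q :: nat
  assumes "tds X T"
    and "top_transitive X T"
    and "totally_disconnected X"
    and "\<forall>V. openin (top_of_set X) V \<and> V \<noteq> {} \<longrightarrow>
           (\<exists>M. invariant_prob X T M \<and> emeasure M V > 0)"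
    and "0 < p" and "0 < q" and "coprime p q" and "p < q"
    and "continuous_eigenvalue X T (exp (2 * pi * \<i> * of_real (real p / real q)))"
  shows "\<exists>U. U \<subseteq> X \<and> clopen_in X U \<and>
           K0_class X T (\<lambda>x. int q * indicator U x) = K0_class X T (\<lambda>x. int p)"
proof -
  define l where "l = exp (2 * pi * \<i> * of_real (real p / real q))"
  have primitive: "l ^ n = 1 \<longleftrightarrow> q dvd n" for n
    unfolding l_def using assms(6,7) by (rule exp_rational_power_eq_1_iff)
  have "T ` X = X"
    using assms(1) unfolding tds_def homeomorphism_def by blast
  moreover have "l ^ q = 1"
    using primitive[of q] by simp
  ultimately obtain r where r: "continuous_on X r" "\<And>x. x \<in> X \<Longrightarrow> r x ^ q = 1"
    "\<And>x. x \<in> X \<Longrightarrow> r (T x) = l * r x"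
    using root_unity_eigenfunction[OF _ assms(2) assms(9)[folded l_def]] by blast
  obtain k where k: "continuous_on X k" "\<And>x. x \<in> X \<Longrightarrow> k x < q"
    "\<And>x. x \<in> X \<Longrightarrow> k (T x) = (k x + 1) mod q"
    using root_unity_eigenfunction_exponent[OF assms(6) primitive r] by blast
  define U where "U = {x \<in> X. k x < p}"
  have "U = X \<inter> k -` {..<p}"
    by (auto simp: U_def)
  then have "clopen_in X U"
    using clopen_in_preimage_discrete[OF k(1)] by simp
  moreover have "K0_class X T (\<lambda>x. int q * indicator U x) = K0_class X T (\<lambda>x. int p)"
    unfolding U_def using k assms(8) by (intro K0_class_rotation_indicator) auto
  moreover have "U \<subseteq> X"
    by (simp add: U_def)
  ultimately show ?thesis
    by blast
qed

end
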